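(* Let $P,Q,R_0,R_1$ be integers with $PQ\ne0$, $\Delta:=P^2-4Q\neq0$, $|R_0|+|R_1|>0$, $\gcd(P,Q)=\gcd(R_1,Q)=1$, such that $\alpha/\beta$ is not a root of unity, where $\alpha,\beta$ are the roots of $x^2-Px+Q$; let $U_n=(\alpha^n-\beta^n)/(\alpha-\beta)$. Let $n\ge k$ be positive integers. Then for every $j\in\{k,k+1,\dots,n\}$, \[\prod_{\substack{k\le i\le n\\ i\ne j}}\left(R_0Q\left(\frac{U_{j-1}}{U_j}-\frac{U_{i-1}}{U_i}\right)\right)=(-1)^{n-j}R_0^{\,n-k}Q^{f(j,k,n)}\frac{[j-k]_{\boldsymbol U}!\,[n-j]_{\boldsymbol U}!}{U_j^{\,n-k-1}\,(U_kU_{k+1}\cdots U_n)}.\] Furthermore, if $k\ge2$, then for every $j\in\{k,\dots,n\}$, \[\prod_{\substack{k\le i\le n\\ i\ne j}}\left(R_1\left(\frac{U_i}{U_{i-1}}-\frac{U_j}{U_{j-1}}\right)\right)=(-1)^{n-j}R_1^{\,n-k}Q^{f(j,k,n)-(n-k)}\frac{[j-k]_{\boldsymbol U}!\,[n-j]_{\boldsymbol U}!}{U_{j-1}^{\,n-k-1}\,(U_{k-1}U_k\cdots U_{n-1})}.\]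
   Context: $U_0=0,U_1=1,U_{n+2}=PU_{n+1}-QU_n$; $[j]_{\boldsymbol U}!:=U_1\cdots U_j$ with $[0]_{\boldsymbol U}!=1$. For $k\le j\le n$, $f(j,k,n):=\sum_{k\le i\le n,\ i\ne j}\min(i,j)$. *)

theory Defs
  imports Complex_Main
begin

fun lucasU :: "int \<Rightarrow> int \<Rightarrow> nat \<Rightarrow> int" where
  "lucasU P Q 0 = 0"
| "lucasU P Q (Suc 0) = 1"
| "lucasU P Q (Suc (Suc n)) = P * lucasU P Q (Suc n) - Q * lucasU P Q n"

definition ufact :: "int \<Rightarrow> int \<Rightarrow> nat \<Rightarrow> int" where
  "ufact P Q j = (\<Prod>i\<in>{1..j}. lucasU P Q i)"

definition fjkn :: "nat \<Rightarrow> nat \<Rightarrow> nat \<Rightarrow> nat" where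
  "fjkn j k n = (\<Sum>i\<in>{k..n} - {j}. min i j)"

end

theory Submission
  imports Defs
begin

text \<open>
  Writing both quotients over a common denominator, every factor of either product has numerator
  \<open>U\<^sub>j\<^sub>-\<^sub>1 U\<^sub>i - U\<^sub>i\<^sub>-\<^sub>1 U\<^sub>j\<close>, which by d'Ocagne's identity equals
  \<open>\<plusminus>Q\<^bsup>min(i,j)-1\<^esup> U\<^sub>|\<^sub>i\<^sub>-\<^sub>j\<^sub>|\<close>, the sign being negative exactly when \<open>i > j\<close>.
  Multiplying over \<open>i \<noteq> j\<close>, the signs give \<open>(-1)\<^bsup>n-j\<^esup>\<close>, the powers of \<open>Q\<close> give
  \<open>Q\<^bsup>f(j,k,n)\<^esup>\<close> (up to the shift by \<open>n - k\<close> in the second product), the terms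
  \<open>U\<^sub>|\<^sub>i\<^sub>-\<^sub>j\<^sub>|\<close> give \<open>[j-k]\<^sub>U! [n-j]\<^sub>U!\<close>, and the denominators give the stated power of
  \<open>U\<^sub>j\<close> (resp. \<open>U\<^sub>j\<^sub>-\<^sub>1\<close>) times the product of all \<open>U\<^sub>i\<close> (resp. \<open>U\<^sub>i\<^sub>-\<^sub>1\<close>). All divisions are
  legitimate because \<open>U\<^sub>m \<noteq> 0\<close> for \<open>m > 0\<close> when \<open>\<alpha>/\<beta>\<close> is not a root of unity.
\<close>

lemma lucasU_binet:
  fixes \<alpha> \<beta> :: "'a::comm_ring_1"
  assumes "\<alpha> + \<beta> = of_int P" and "\<alpha> * \<beta> = of_int Q"
  shows "(\<alpha> - \<beta>) * of_int (lucasU P Q n) = \<alpha> ^ n - \<beta> ^ n"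
proof (induction n rule: induct_nat_012)
  case (ge2 n)
  have "(\<alpha> - \<beta>) * of_int (lucasU P Q (Suc (Suc n)))
      = (\<alpha> + \<beta>) * ((\<alpha> - \<beta>) * of_int (lucasU P Q (Suc n)))
        - \<alpha> * \<beta> * ((\<alpha> - \<beta>) * of_int (lucasU P Q n))"
    using assms by (simp add: algebra_simps)
  also have "\<dots> = (\<alpha> + \<beta>) * (\<alpha> ^ Suc n - \<beta> ^ Suc n) - \<alpha> * \<beta> * (\<alpha> ^ n - \<beta> ^ n)"
    using ge2 by simp
  also have "\<dots> = \<alpha> ^ Suc (Suc n) - \<beta> ^ Suc (Suc n)"
    by (simp add: algebra_simps)
  finally show ?case .
qed simp_all

lemma lucasU_nonzero:
  fixes \<alpha> \<beta> :: "'a::field_char_0"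
  assumes "\<alpha> + \<beta> = of_int P" and "\<alpha> * \<beta> = of_int Q" and "Q \<noteq> 0"
    and "\<not> (\<exists>m::nat. m > 0 \<and> (\<alpha> / \<beta>) ^ m = 1)" and "n > 0"
  shows "lucasU P Q n \<noteq> 0"
proof
  assume "lucasU P Q n = 0"
  then have "\<alpha> ^ n = \<beta> ^ n"
    using lucasU_binet[OF assms(1,2), of n] by simp
  moreover have "\<beta> \<noteq> 0"
    using assms(2,3) by auto
  ultimately have "(\<alpha> / \<beta>) ^ n = 1"
    by (simp add: power_divide)
  with assms(4,5) show False
    by blast
qed

lemma lucasU_dOcagne:
  "lucasU P Q a * lucasU P Q (Suc a + d) - lucasU P Q (a + d) * lucasU P Q (Suc a)
     = - (Q ^ a * lucasU P Q d)"
proof (induction a)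
  case (Suc a)
  have "lucasU P Q (Suc a) * lucasU P Q (Suc (Suc a) + d)
          - lucasU P Q (Suc a + d) * lucasU P Q (Suc (Suc a))
      = Q * (lucasU P Q a * lucasU P Q (Suc a + d) - lucasU P Q (a + d) * lucasU P Q (Suc a))"
    by (simp add: algebra_simps)
  also have "\<dots> = - (Q ^ Suc a * lucasU P Q d)"
    using Suc.IH by simp
  finally show ?case .
qed simp

text \<open>\<open>i - j + (j - i)\<close> is \<open>|i - j|\<close> in truncated subtraction.\<close>

lemma lucasU_cross_diff:
  assumes "1 \<le> i" and "1 \<le> j"
  shows "lucasU P Q (j - 1) * lucasU P Q i - lucasU P Q (i - 1) * lucasU P Q j
           = (if j < i then -1 else 1) * Q ^ (min i j - 1) * lucasU P Q (i - j + (j - i))"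
proof (cases "j < i")
  case True
  obtain a d where "j = Suc a" and "i = Suc a + d"
    using assms True by (intro that[of "j - 1" "i - j"]) auto
  then show ?thesis
    using lucasU_dOcagne[of P Q a d] True by simp
next
  case False
  obtain a d where "i = Suc a" and "j = Suc a + d"
    using assms False by (intro that[of "i - 1" "j - i"]) auto
  then show ?thesis
    using lucasU_dOcagne[of P Q a d] False by (simp add: algebra_simps)
qed

lemma prod_remove_div_pairs:
  fixes v :: "'b \<Rightarrow> 'a::field"
  assumes "finite A" and "j \<in> A" and "v j \<noteq> 0"
  shows "(\<Prod>i\<in>A - {j}. c * g i / (v i * v j))
           = c ^ card (A - {j}) * prod g (A - {j})
             / (v j powi (int (card (A - {j})) - 1) * prod v A)"
proof -
  have "v j powi (int (card (A - {j})) - 1) * prod v A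
      = v j powi (int (card (A - {j})) - 1) * v j * prod v (A - {j})"
    using assms by (simp add: prod.remove mult.assoc)
  also have "\<dots> = v j ^ card (A - {j}) * prod v (A - {j})"
    using assms(3) by (simp flip: power_int_add_1)
  finally show ?thesis
    by (simp add: prod_dividef prod.distrib)
qed

lemma prod_sign_greater:
  assumes "j \<in> {k..n}"
  shows "(\<Prod>i\<in>{k..n} - {j}. if j < i then -1 else 1 :: 'a::comm_ring_1) = (-1) ^ (n - j)"
proof -
  have "({k..n} - {j}) \<inter> {i. j < i} = {Suc j..n}"
    using assms by auto
  then show ?thesis
    by (simp add: prod.If_cases)
qed

lemma prod_lucasU_dist_eq_ufact:
  assumes "j \<in> {k..n}"
  shows "(\<Prod>i\<in>{k..n} - {j}. lucasU P Q (i - j + (j - i))) = ufact P Q (j - k) * ufact P Q (n - j)"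
proof -
  have split: "{k..n} - {j} = {k..<j} \<union> {Suc j..n}"
    using assms by auto
  have "(\<Prod>i\<in>{k..n} - {j}. lucasU P Q (i - j + (j - i)))
      = (\<Prod>i\<in>{k..<j}. lucasU P Q (i - j + (j - i))) * (\<Prod>i\<in>{Suc j..n}. lucasU P Q (i - j + (j - i)))"
    unfolding split by (rule prod.union_disjoint) auto
  moreover have "(\<Prod>i\<in>{k..<j}. lucasU P Q (i - j + (j - i))) = ufact P Q (j - k)"
    unfolding ufact_def
    by (rule prod.reindex_bij_witness[where i="\<lambda>m. j - m" and j="\<lambda>i. j - i"]) (use assms in auto)
  moreover have "(\<Prod>i\<in>{Suc j..n}. lucasU P Q (i - j + (j - i))) = ufact P Q (n - j)"
    unfolding ufact_def
    by (rule prod.reindex_bij_witness[where i="\<lambda>m. m + j" and j="\<lambda>i. i - j"]) (use assms in auto)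
  ultimately show ?thesis
    by simp
qed

lemma prod_diff_lucasU_pred_over:
  fixes R :: int
  assumes "1 \<le> k" and "j \<in> {k..n}" and "\<And>i. i \<in> {k..n} \<Longrightarrow> lucasU P Q i \<noteq> 0"
  shows "(\<Prod>i\<in>{k..n} - {j}.
            of_int R * of_int Q * (of_int (lucasU P Q (j-1)) / of_int (lucasU P Q j)
                                   - of_int (lucasU P Q (i-1)) / of_int (lucasU P Q i)))
         = (-1)^(n-j) * of_int R ^ (n-k) * of_int Q ^ fjkn j k n
           * of_int (ufact P Q (j-k)) * of_int (ufact P Q (n-j))
           / ((of_int (lucasU P Q j) :: 'a::field_char_0) powi (int (n-k) - 1)
              * of_int (\<Prod>i\<in>{k..n}. lucasU P Q i))"
proof -
  let ?u = "\<lambda>i. of_int (lucasU P Q i) :: 'a"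
  let ?g = "\<lambda>i. (if j < i then -1 else 1) * of_int Q ^ min i j * ?u (i - j + (j - i))"
  have "of_int R * of_int Q * (?u (j-1) / ?u j - ?u (i-1) / ?u i) = of_int R * ?g i / (?u i * ?u j)"
    if "i \<in> {k..n} - {j}" for i
  proof -
    have "1 \<le> i" and "1 \<le> j" and "?u i \<noteq> 0" and "?u j \<noteq> 0"
      using that assms by auto
    moreover have "of_int Q ^ min i j = (of_int Q :: 'a) * of_int Q ^ (min i j - 1)"
      using \<open>1 \<le> i\<close> \<open>1 \<le> j\<close> by (simp flip: power_Suc)
    ultimately show ?thesis
      using arg_cong[OF lucasU_cross_diff[of i j P Q], of "of_int :: int \<Rightarrow> 'a"]
      by (simp add: field_simps)
  qed
  then have "(\<Prod>i\<in>{k..n} - {j}. of_int R * of_int Q * (?u (j-1) / ?u j - ?u (i-1) / ?u i))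
      = (\<Prod>i\<in>{k..n} - {j}. of_int R * ?g i / (?u i * ?u j))"
    by (rule prod.cong[OF refl])
  also have "\<dots> = of_int R ^ (n-k) * prod ?g ({k..n} - {j}) / (?u j powi (int (n-k) - 1) * prod ?u {k..n})"
    using prod_remove_div_pairs[of "{k..n}" j ?u] assms by (simp add: card_Diff_singleton)
  also have "prod ?g ({k..n} - {j}) = (-1)^(n-j) * of_int Q ^ fjkn j k n
                                      * (of_int (ufact P Q (j-k)) * of_int (ufact P Q (n-j)))"
  proof -
    have "prod ?g ({k..n} - {j}) = (\<Prod>i\<in>{k..n} - {j}. if j < i then -1 else 1)
        * of_int Q ^ (\<Sum>i\<in>{k..n} - {j}. min i j) * (\<Prod>i\<in>{k..n} - {j}. ?u (i - j + (j - i)))"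
      by (simp add: prod.distrib power_sum)
    then show ?thesis
      using prod_sign_greater[OF assms(2), where 'a='a]
        arg_cong[OF prod_lucasU_dist_eq_ufact[OF assms(2), of P Q], of "of_int :: int \<Rightarrow> 'a"]
      by (simp add: fjkn_def)
  qed
  finally show ?thesis
    by (simp add: mult.assoc)
qed

lemma prod_diff_lucasU_over_pred:
  fixes R :: int
  assumes "2 \<le> k" and "j \<in> {k..n}" and nonzero: "\<And>i. i \<in> {k-1..n-1} \<Longrightarrow> lucasU P Q i \<noteq> 0"
  shows "(\<Prod>i\<in>{k..n} - {j}.
            of_int R * (of_int (lucasU P Q i) / of_int (lucasU P Q (i-1))
                        - of_int (lucasU P Q j) / of_int (lucasU P Q (j-1))))
         = (-1)^(n-j) * of_int R ^ (n-k) * of_int Q ^ (fjkn j k n - (n-k))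
           * of_int (ufact P Q (j-k)) * of_int (ufact P Q (n-j))
           / ((of_int (lucasU P Q (j-1)) :: 'a::field_char_0) powi (int (n-k) - 1)
              * of_int (\<Prod>i\<in>{k-1..n-1}. lucasU P Q i))"
proof -
  let ?u = "\<lambda>i. of_int (lucasU P Q i) :: 'a"
  let ?g = "\<lambda>i. (if j < i then -1 else 1) * of_int Q ^ (min i j - 1) * ?u (i - j + (j - i))"
  have nonzero_pred_j: "lucasU P Q (j - 1) \<noteq> 0"
    using assms(1,2) by (intro nonzero) auto
  have "of_int R * (?u i / ?u (i-1) - ?u j / ?u (j-1)) = of_int R * ?g i / (?u (i-1) * ?u (j-1))"
    if "i \<in> {k..n} - {j}" for i
  proof -
    have "i - 1 \<in> {k-1..n-1}" and "j - 1 \<in> {k-1..n-1}"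
      using that assms(1,2) by auto
    then have "?u (i-1) \<noteq> 0" and "?u (j-1) \<noteq> 0"
      using nonzero by auto
    moreover have "1 \<le> i" and "1 \<le> j"
      using that assms(1,2) by auto
    ultimately show ?thesis
      using arg_cong[OF lucasU_cross_diff[of i j P Q], of "of_int :: int \<Rightarrow> 'a"]
      by (simp add: field_simps)
  qed
  then have "(\<Prod>i\<in>{k..n} - {j}. of_int R * (?u i / ?u (i-1) - ?u j / ?u (j-1)))
      = (\<Prod>i\<in>{k..n} - {j}. of_int R * ?g i / (?u (i-1) * ?u (j-1)))"
    by (rule prod.cong[OF refl])
  also have "\<dots> = of_int R ^ (n-k) * prod ?g ({k..n} - {j})
                  / (?u (j-1) powi (int (n-k) - 1) * (\<Prod>i\<in>{k..n}. ?u (i-1)))"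
    using prod_remove_div_pairs[of "{k..n}" j "\<lambda>i. ?u (i-1)"] assms(1,2) nonzero_pred_j
    by (simp add: card_Diff_singleton)
  also have "(\<Prod>i\<in>{k..n}. ?u (i-1)) = of_int (\<Prod>i\<in>{k-1..n-1}. lucasU P Q i)"
    by (simp, rule prod.reindex_bij_witness[where i="\<lambda>i. i + 1" and j="\<lambda>i. i - 1"])
      (use assms in auto)
  also have "prod ?g ({k..n} - {j}) = (-1)^(n-j) * of_int Q ^ (fjkn j k n - (n-k))
                                      * (of_int (ufact P Q (j-k)) * of_int (ufact P Q (n-j)))"
  proof -
    have "prod ?g ({k..n} - {j}) = (\<Prod>i\<in>{k..n} - {j}. if j < i then -1 else 1)
        * of_int Q ^ (\<Sum>i\<in>{k..n} - {j}. min i j - 1) * (\<Prod>i\<in>{k..n} - {j}. ?u (i - j + (j - i)))"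
      by (simp add: prod.distrib power_sum)
    also have "(\<Sum>i\<in>{k..n} - {j}. min i j - 1) = fjkn j k n - (n-k)"
      unfolding fjkn_def using assms(1,2) by (subst sum_subtractf_nat) (auto simp: card_Diff_singleton)
    finally show ?thesis
      using prod_sign_greater[OF assms(2), where 'a='a]
        arg_cong[OF prod_lucasU_dist_eq_ufact[OF assms(2), of P Q], of "of_int :: int \<Rightarrow> 'a"]
      by simp
  qed
  finally show ?thesis
    by (simp add: mult.assoc)
qed

theorem lemma4:
  fixes P Q R0 R1 :: int and \<alpha> \<beta> :: complex and k n :: nat
  assumes "P * Q \<noteq> 0"
    and "P^2 - 4*Q \<noteq> 0"
    and "\<bar>R0\<bar> + \<bar>R1\<bar> > 0"
    and "gcd P Q = 1" and "gcd R1 Q = 1"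
    and "\<alpha> + \<beta> = of_int P" and "\<alpha> * \<beta> = of_int Q"
    and "\<not> (\<exists>m::nat. m > 0 \<and> (\<alpha> / \<beta>) ^ m = 1)"
    and "1 \<le> k" and "k \<le> n"
  shows "(\<forall>j\<in>{k..n}.
           (\<Prod>i\<in>{k..n} - {j}.
              of_int R0 * of_int Q * (of_int (lucasU P Q (j-1)) / of_int (lucasU P Q j)
                                     - of_int (lucasU P Q (i-1)) / of_int (lucasU P Q i)))
           = (-1)^(n-j) * of_int R0 ^ (n-k) * of_int Q ^ fjkn j k n
             * of_int (ufact P Q (j-k)) * of_int (ufact P Q (n-j))
             / ((of_int (lucasU P Q j) :: rat) powi (int (n-k) - 1)
                * of_int (\<Prod>i\<in>{k..n}. lucasU P Q i)))
       \<and> (k \<ge> 2 \<longrightarrow> (\<forall>j\<in>{k..n}.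
           (\<Prod>i\<in>{k..n} - {j}.
              of_int R1 * (of_int (lucasU P Q i) / of_int (lucasU P Q (i-1))
                           - of_int (lucasU P Q j) / of_int (lucasU P Q (j-1))))
           = (-1)^(n-j) * of_int R1 ^ (n-k) * of_int Q ^ (fjkn j k n - (n-k))
             * of_int (ufact P Q (j-k)) * of_int (ufact P Q (n-j))
             / ((of_int (lucasU P Q (j-1)) :: rat) powi (int (n-k) - 1)
                * of_int (\<Prod>i\<in>{k-1..n-1}. lucasU P Q i))))"
proof -
  have nonzero: "lucasU P Q i \<noteq> 0" if "0 < i" for i
    using lucasU_nonzero[OF assms(6,7) _ assms(8) that] assms(1) by simp
  show ?thesis
    by (intro conjI ballI impI prod_diff_lucasU_pred_over prod_diff_lucasU_over_pred)
      (use assms(9) nonzero in auto)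
qed

end
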